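(* Let $L$ be a bounded distributive lattice and $f\colon L^n\to L$ an aggregation function. If $f$ is inf-homogeneous and comonotone supremal, or $f$ is sup-homogeneous and comonotone infimal, then $f$ is a Sugeno integral, i.e. $f=\mathsf{Su}_m$ for some $L$-valued capacity $m$ on $[n]$.
   Context: $[n]=\{1,\dots,n\}$. An aggregation function is a monotone $f\colon L^n\to L$ with $f(0,\dots,0)=0$, $f(1,\dots,1)=1$. An $L$-valued capacity is $m\colon2^{[n]}\to L$, monotone, $m(\emptyset)=0$, $m([n])=1$; $\mathsf{Su}_m(\mathbf x)=\bigvee_{I\subseteq[n]}\big(m(I)\wedge\bigwedge_{i\in I}x_i\big)$ (empty meet $=1$). For $c\in L$, $\mathbf c=(c,\dots,c)$; $f$ is inf-homogeneous if $f(\mathbf c\wedge\mathbf x)=c\wedge f(\mathbf x)$, sup-homogeneous if $f(\mathbf c\vee\mathbf x)=c\vee f(\mathbf x)$, for all $\mathbf x\in L^n,c\in L$. $\mathbf x,\mathbf y$ are comonotone if for all $i,j$: ($x_i\le x_j$ and $y_i\le y_j$) or ($x_i\ge x_j$ and $y_i\ge y_j$). $f$ is comonotone supremal (resp. infimal) if $f(\mathbf x\vee\mathbf y)=f(\mathbf x)\vee f(\mathbf y)$ (resp. $f(\mathbf x\wedge\mathbf y)=f(\mathbf x)\wedge f(\mathbf y)$) for all comonotone $\mathbf x,\mathbf y$. *)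

theory Defs
  imports Main
begin

text \<open>L is a bounded distributive lattice; [n] is modelled as a finite index type 'n,
  so L^n is the function type 'n \<Rightarrow> L with the pointwise order.\<close>

definition fin_Inf :: "'a::bounded_lattice set \<Rightarrow> 'a" where
  "fin_Inf A = Finite_Set.fold inf top A"

definition fin_Sup :: "'a::bounded_lattice set \<Rightarrow> 'a" where
  "fin_Sup A = Finite_Set.fold sup bot A"

definition aggregation :: "(('n::finite \<Rightarrow> 'a::{distrib_lattice,bounded_lattice}) \<Rightarrow> 'a) \<Rightarrow> bool" where
  "aggregation f \<longleftrightarrow> mono f \<and> f (\<lambda>_. bot) = bot \<and> f (\<lambda>_. top) = top"

definition capacity :: "('n::finite set \<Rightarrow> 'a::{distrib_lattice,bounded_lattice}) \<Rightarrow> bool" where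
  "capacity m \<longleftrightarrow> mono m \<and> m {} = bot \<and> m UNIV = top"

definition sugeno :: "('n::finite set \<Rightarrow> 'a::{distrib_lattice,bounded_lattice}) \<Rightarrow> ('n \<Rightarrow> 'a) \<Rightarrow> 'a" where
  "sugeno m x = fin_Sup ((\<lambda>I. inf (m I) (fin_Inf (x ` I))) ` (UNIV :: 'n set set))"

definition inf_homogeneous :: "(('n \<Rightarrow> 'a::{distrib_lattice,bounded_lattice}) \<Rightarrow> 'a) \<Rightarrow> bool" where
  "inf_homogeneous f \<longleftrightarrow> (\<forall>x c. f (\<lambda>i. inf c (x i)) = inf c (f x))"

definition sup_homogeneous :: "(('n \<Rightarrow> 'a::{distrib_lattice,bounded_lattice}) \<Rightarrow> 'a) \<Rightarrow> bool" where
  "sup_homogeneous f \<longleftrightarrow> (\<forall>x c. f (\<lambda>i. sup c (x i)) = sup c (f x))"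

definition comonotone :: "('n \<Rightarrow> 'a::order) \<Rightarrow> ('n \<Rightarrow> 'a) \<Rightarrow> bool" where
  "comonotone x y \<longleftrightarrow> (\<forall>i j. (x i \<le> x j \<and> y i \<le> y j) \<or> (x j \<le> x i \<and> y j \<le> y i))"

definition comonotone_supremal :: "(('n \<Rightarrow> 'a::{distrib_lattice,bounded_lattice}) \<Rightarrow> 'a) \<Rightarrow> bool" where
  "comonotone_supremal f \<longleftrightarrow> (\<forall>x y. comonotone x y \<longrightarrow> f (\<lambda>i. sup (x i) (y i)) = sup (f x) (f y))"

definition comonotone_infimal :: "(('n \<Rightarrow> 'a::{distrib_lattice,bounded_lattice}) \<Rightarrow> 'a) \<Rightarrow> bool" where
  "comonotone_infimal f \<longleftrightarrow> (\<forall>x y. comonotone x y \<longrightarrow> f (\<lambda>i. inf (x i) (y i)) = inf (f x) (f y))"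

end

theory Submission imports Defs begin

text \<open>The capacity is read off on characteristic vectors, \<open>m I = f 1\<^sub>I\<close>. The lower
  bound \<open>Su\<^sub>m \<le> f\<close> only needs \<open>f (d \<and> 1\<^sub>I) = d \<and> f 1\<^sub>I\<close>; under comonotone infimality this
  holds because a constant vector is comonotone with \<open>d \<and> 1\<^sub>I\<close>, and idempotency follows from
  homogeneity.

  Under sup-homogeneity,
  \<open>f x \<le> (x\<^sub>k \<and> f x[k:=1]) \<or> f x[k:=0]\<close> reduces \<open>x\<close> to a Boolean vector one coordinate at a
  time. Under inf-homogeneity one enlarges a set \<open>A\<close> on which \<open>y\<close> attains its maximum \<open>d\<close>:
  for \<open>e\<close> the join of the \<open>y\<^sub>j\<close> with \<open>j \<notin> A\<close>, comonotone supremality gives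
  \<open>f y \<le> (d \<and> m A) \<or> e\<close>, and each \<open>f y \<and> y\<^sub>j = f (y\<^sub>j \<and> y)\<close> is bounded by induction, since
  \<open>y\<^sub>j \<and> y\<close> attains its maximum on \<open>A \<union> {j}\<close>.\<close>

lemma fin_Inf_empty [simp]: "fin_Inf {} = top"
  by (simp add: fin_Inf_def)

lemma fin_Sup_empty [simp]: "fin_Sup {} = bot"
  by (simp add: fin_Sup_def)

lemma fin_Inf_insert [simp]:
  fixes a :: "'a::bounded_lattice"
  assumes "finite A"
  shows "fin_Inf (insert a A) = inf a (fin_Inf A)"
proof -
  interpret comp_fun_idem "inf :: 'a \<Rightarrow> 'a \<Rightarrow> 'a" by (fact comp_fun_idem_inf)
  show ?thesis using assms unfolding fin_Inf_def by simp
qed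

lemma fin_Sup_insert [simp]:
  fixes a :: "'a::bounded_lattice"
  assumes "finite A"
  shows "fin_Sup (insert a A) = sup a (fin_Sup A)"
proof -
  interpret comp_fun_idem "sup :: 'a \<Rightarrow> 'a \<Rightarrow> 'a" by (fact comp_fun_idem_sup)
  show ?thesis using assms unfolding fin_Sup_def by simp
qed

lemma le_fin_Inf_iff: "finite A \<Longrightarrow> b \<le> fin_Inf A \<longleftrightarrow> (\<forall>a\<in>A. b \<le> a)"
  by (induct A rule: finite_induct) auto

lemma fin_Sup_le_iff: "finite A \<Longrightarrow> fin_Sup A \<le> b \<longleftrightarrow> (\<forall>a\<in>A. a \<le> b)"
  by (induct A rule: finite_induct) auto

lemma fin_Inf_lower: "finite A \<Longrightarrow> a \<in> A \<Longrightarrow> fin_Inf A \<le> a"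
  using le_fin_Inf_iff by blast

lemma fin_Sup_upper: "finite A \<Longrightarrow> a \<in> A \<Longrightarrow> a \<le> fin_Sup A"
  using fin_Sup_le_iff by blast

lemma inf_fin_Sup_image:
  fixes a :: "'a::{distrib_lattice,bounded_lattice}"
  shows "finite B \<Longrightarrow> inf a (fin_Sup (g ` B)) = fin_Sup ((\<lambda>j. inf a (g j)) ` B)"
  by (induct B rule: finite_induct) (auto simp: inf_sup_distrib1)

definition char_vec :: "'n set \<Rightarrow> 'n \<Rightarrow> 'a::bounded_lattice" where
  "char_vec A = (\<lambda>i. if i \<in> A then top else bot)"

definition capacity_of :: "(('n \<Rightarrow> 'a::bounded_lattice) \<Rightarrow> 'a) \<Rightarrow> 'n set \<Rightarrow> 'a" where
  "capacity_of f I = f (char_vec I)"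

lemma mono_capacity_of: "mono f \<Longrightarrow> mono (capacity_of f)"
  by (intro monoI) (auto simp: capacity_of_def char_vec_def le_fun_def intro!: monoD[of f])

lemma capacity_capacity_of: "aggregation f \<Longrightarrow> capacity (capacity_of f)"
  by (simp add: aggregation_def capacity_def mono_capacity_of) (simp add: capacity_of_def char_vec_def)

context
  fixes m :: "'n::finite set \<Rightarrow> 'a::{distrib_lattice,bounded_lattice}"
begin

lemma inf_le_sugeno: "inf (m I) (fin_Inf (x ` I)) \<le> sugeno m x"
  unfolding sugeno_def by (rule fin_Sup_upper) auto

lemma sugeno_leI: "(\<And>I. inf (m I) (fin_Inf (x ` I)) \<le> b) \<Longrightarrow> sugeno m x \<le> b"
  unfolding sugeno_def by (subst fin_Sup_le_iff) auto

lemma sugeno_mono: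
  assumes "x \<le> y"
  shows "sugeno m x \<le> sugeno m y"
proof (rule sugeno_leI)
  fix I
  have "fin_Inf (x ` I) \<le> fin_Inf (y ` I)"
    using assms by (auto simp: le_fun_def le_fin_Inf_iff intro: order_trans[OF fin_Inf_lower])
  then have "inf (m I) (fin_Inf (x ` I)) \<le> inf (m I) (fin_Inf (y ` I))"
    by (rule inf_mono[OF order_refl])
  also have "\<dots> \<le> sugeno m y"
    by (rule inf_le_sugeno)
  finally show "inf (m I) (fin_Inf (x ` I)) \<le> sugeno m y" .
qed

lemma inf_sugeno_fun_upd_top_le:
  assumes "mono m"
  shows "inf (x k) (sugeno m (x(k := top))) \<le> sugeno m x"
proof -
  have "inf (x k) (inf (m I) (fin_Inf (x(k := top) ` I))) \<le> sugeno m x" for I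
  proof -
    have "inf (x k) (fin_Inf (x(k := top) ` I)) \<le> x i" if "i \<in> insert k I" for i
    proof (cases "i = k")
      case False
      then have "fin_Inf (x(k := top) ` I) \<le> x i"
        using that fin_Inf_lower[of "x(k := top) ` I" "x i"] by force
      then show ?thesis by (rule le_infI2)
    qed simp
    then have inf_le: "inf (x k) (fin_Inf (x(k := top) ` I)) \<le> fin_Inf (x ` insert k I)"
      by (simp add: le_fin_Inf_iff)
    have "inf (x k) (inf (m I) (fin_Inf (x(k := top) ` I)))
        \<le> inf (m (insert k I)) (fin_Inf (x ` insert k I))"
    proof (rule le_infI)
      have "m I \<le> m (insert k I)"
        using assms by (rule monoD) auto
      then show "inf (x k) (inf (m I) (fin_Inf (x(k := top) ` I))) \<le> m (insert k I)"
        by (rule le_infI2[OF le_infI1])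
      show "inf (x k) (inf (m I) (fin_Inf (x(k := top) ` I))) \<le> fin_Inf (x ` insert k I)"
        using inf_mono[OF order_refl inf_le2] inf_le by (rule order_trans)
    qed
    then show ?thesis
      by (rule order_trans[OF _ inf_le_sugeno])
  qed
  then show ?thesis
    unfolding sugeno_def by (simp add: inf_fin_Sup_image fin_Sup_le_iff)
qed

end

lemma sugeno_capacity_of_le:
  assumes "mono f"
    and inf_char_vec: "\<And>d I. f (\<lambda>i. inf d (char_vec I i)) = inf d (f (char_vec I))"
  shows "sugeno (capacity_of f) x \<le> f x"
proof (rule sugeno_leI)
  fix I
  let ?c = "fin_Inf (x ` I)"
  have "inf (capacity_of f I) ?c = inf ?c (f (char_vec I))"
    by (simp add: capacity_of_def inf_commute)
  also have "\<dots> = f (\<lambda>i. inf ?c (char_vec I i))"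
    by (rule inf_char_vec[symmetric])
  also have "\<dots> \<le> f x"
    using assms(1) by (rule monoD) (auto simp: le_fun_def char_vec_def intro: fin_Inf_lower)
  finally show "inf (capacity_of f I) ?c \<le> f x" .
qed

lemma sup_homogeneous_le_median:
  assumes "mono f" "sup_homogeneous f"
  shows "f x \<le> sup (inf (x k) (f (x(k := top)))) (f (x(k := bot)))"
proof -
  have "f x \<le> f (\<lambda>i. sup (x k) ((x(k := bot)) i))"
    using assms(1) by (rule monoD) (auto simp: le_fun_def)
  also have "\<dots> = sup (x k) (f (x(k := bot)))"
    using assms(2) unfolding sup_homogeneous_def by blast
  finally have "f x \<le> sup (x k) (f (x(k := bot)))" .
  moreover have "f x \<le> f (x(k := top))"
    using assms(1) by (rule monoD) (simp add: le_fun_def)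
  ultimately have "f x \<le> inf (sup (x k) (f (x(k := bot)))) (f (x(k := top)))"
    by (rule le_infI)
  also have "\<dots> = sup (inf (x k) (f (x(k := top)))) (inf (f (x(k := bot))) (f (x(k := top))))"
    by (simp add: inf_sup_distrib2)
  also have "\<dots> \<le> sup (inf (x k) (f (x(k := top)))) (f (x(k := bot)))"
    by (rule sup_mono) simp_all
  finally show ?thesis .
qed

lemma le_sugeno_if_sup_homogeneous:
  fixes f :: "('n::finite \<Rightarrow> 'a::{distrib_lattice,bounded_lattice}) \<Rightarrow> 'a"
  assumes "mono f" "sup_homogeneous f"
  shows "f x \<le> sugeno (capacity_of f) x"
proof -
  have "finite K \<Longrightarrow> \<forall>i. i \<notin> K \<longrightarrow> x i = bot \<or> x i = top \<Longrightarrow> f x \<le> sugeno (capacity_of f) x"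
    for K x
  proof (induction K arbitrary: x rule: finite_induct)
    case empty
    define I where "I = {i. x i = top}"
    have "x = char_vec I"
      using empty.prems by (force simp: fun_eq_iff char_vec_def I_def)
    moreover have "fin_Inf (x ` I) = top"
      by (rule top_unique[THEN iffD1]) (simp add: I_def le_fin_Inf_iff)
    ultimately show ?case
      using inf_le_sugeno[of "capacity_of f" I x] by (simp add: capacity_of_def[of f I])
  next
    case (insert k K)
    have "f x \<le> sup (inf (x k) (f (x(k := top)))) (f (x(k := bot)))"
      by (rule sup_homogeneous_le_median[OF assms])
    also have "\<dots> \<le> sup (inf (x k) (sugeno (capacity_of f) (x(k := top))))
                     (sugeno (capacity_of f) (x(k := bot)))"
      using insert.prems by (intro sup_mono inf_mono order_refl insert.IH) auto
    also have "\<dots> \<le> sugeno (capacity_of f) x"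
      by (rule le_supI[OF inf_sugeno_fun_upd_top_le[OF mono_capacity_of[OF assms(1)]] sugeno_mono])
        (simp add: le_fun_def)
    finally show ?case .
  qed
  from this[of UNIV] show ?thesis by simp
qed

context
  fixes f :: "('n::finite \<Rightarrow> 'a::{distrib_lattice,bounded_lattice}) \<Rightarrow> 'a"
  assumes mono_f: "mono f"
    and inf_hom: "inf_homogeneous f"
    and sup_inf_char_vec:
      "\<And>e d A. f (\<lambda>i. sup e (inf d (char_vec A i))) = sup e (f (\<lambda>i. inf d (char_vec A i)))"
begin

lemma le_sugeno_if_max_outside:
  "finite B \<Longrightarrow> \<forall>i. i \<notin> B \<longrightarrow> y i = d \<Longrightarrow> \<forall>i. y i \<le> d \<Longrightarrow> f y \<le> sugeno (capacity_of f) y"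
proof (induction B arbitrary: y d rule: finite_psubset_induct)
  case (psubset B)
  let ?m = "capacity_of f" and ?A = "- B"
  define e where "e = fin_Sup (y ` B)"
  have below_e: "inf (f y) e \<le> sugeno ?m y"
  proof -
    have "inf (f y) (y j) \<le> sugeno ?m y" if "j \<in> B" for j
    proof -
      have "inf (f y) (y j) = inf (y j) (f y)"
        by (rule inf_commute)
      also have "\<dots> = f (\<lambda>i. inf (y j) (y i))"
        by (rule inf_hom[unfolded inf_homogeneous_def, rule_format, symmetric])
      also have "\<dots> \<le> sugeno ?m (\<lambda>i. inf (y j) (y i))"
        using that psubset.prems by (intro psubset.IH[of "B - {j}" _ "y j"]) (auto simp: inf_absorb1)
      also have "\<dots> \<le> sugeno ?m y"
        by (rule sugeno_mono) (simp add: le_fun_def)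
      finally show ?thesis .
    qed
    then show ?thesis
      unfolding e_def using psubset.hyps by (simp add: inf_fin_Sup_image fin_Sup_le_iff)
  qed
  have on_max: "inf d (?m ?A) \<le> sugeno ?m y"
  proof -
    have "d \<le> fin_Inf (y ` ?A)"
      using psubset.prems by (simp add: le_fin_Inf_iff)
    then have "inf d (?m ?A) \<le> inf (?m ?A) (fin_Inf (y ` ?A))"
      by (auto intro: le_infI1)
    then show ?thesis
      by (rule order_trans[OF _ inf_le_sugeno])
  qed
  have "f y \<le> f (\<lambda>i. sup e (inf d (char_vec ?A i)))"
    using mono_f by (rule monoD)
      (use psubset.prems in \<open>auto simp: le_fun_def char_vec_def e_def intro: le_supI1 fin_Sup_upper\<close>)
  also have "\<dots> = sup e (inf d (?m ?A))"
    by (simp add: sup_inf_char_vec inf_hom[unfolded inf_homogeneous_def] capacity_of_def)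
  finally have "f y = inf (f y) (sup e (inf d (?m ?A)))"
    by (rule inf_absorb1[symmetric])
  also have "\<dots> = sup (inf (f y) e) (inf (f y) (inf d (?m ?A)))"
    by (rule inf_sup_distrib1)
  also have "\<dots> \<le> sup (inf (f y) e) (inf d (?m ?A))"
    by (rule sup_mono[OF order_refl inf_le2])
  also have "\<dots> \<le> sugeno ?m y"
    using below_e on_max by (rule le_supI)
  finally show ?case .
qed

lemma le_sugeno_if_inf_homogeneous: "f x \<le> sugeno (capacity_of f) x"
  by (rule le_sugeno_if_max_outside[of UNIV _ top]) simp_all

end

lemma comonotone_const_inf_char_vec: "comonotone (\<lambda>_. c) (\<lambda>i. inf d (char_vec A i))"
  unfolding comonotone_def char_vec_def by auto

lemma inf_homogeneous_idempotent:
  assumes "f (\<lambda>_. top) = top" "inf_homogeneous f"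
  shows "f (\<lambda>_. c) = c"
  using assms(2)[unfolded inf_homogeneous_def, rule_format, of c "\<lambda>_. top"] assms(1) by simp

lemma sup_homogeneous_idempotent:
  assumes "f (\<lambda>_. bot) = bot" "sup_homogeneous f"
  shows "f (\<lambda>_. c) = c"
  using assms(2)[unfolded sup_homogeneous_def, rule_format, of c "\<lambda>_. bot"] assms(1) by simp

lemma comonotone_infimal_inf_char_vec:
  assumes "\<And>c. f (\<lambda>_. c) = c" "comonotone_infimal f"
  shows "f (\<lambda>i. inf d (char_vec A i)) = inf d (f (char_vec A))"
  using assms(2)[unfolded comonotone_infimal_def, rule_format, OF comonotone_const_inf_char_vec[of d top A]]
  by (simp add: assms(1))

lemma comonotone_supremal_sup_inf_char_vec:
  assumes "\<And>c. f (\<lambda>_. c) = c" "comonotone_supremal f"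
  shows "f (\<lambda>i. sup e (inf d (char_vec A i))) = sup e (f (\<lambda>i. inf d (char_vec A i)))"
  using assms(2)[unfolded comonotone_supremal_def, rule_format, OF comonotone_const_inf_char_vec[of e d A]]
  by (simp add: assms(1))

lemma eq_sugeno_if_inf_homogeneous_comonotone_supremal:
  assumes "aggregation f" "inf_homogeneous f" "comonotone_supremal f"
  shows "f = sugeno (capacity_of f)"
proof (intro ext antisym)
  fix x
  have "mono f" and idem: "\<And>c. f (\<lambda>_. c) = c"
    using assms(1,2) by (auto simp: aggregation_def intro: inf_homogeneous_idempotent)
  show "f x \<le> sugeno (capacity_of f) x"
    using \<open>mono f\<close> assms(2) comonotone_supremal_sup_inf_char_vec[OF idem assms(3)]
    by (rule le_sugeno_if_inf_homogeneous)
  show "sugeno (capacity_of f) x \<le> f x"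
    using \<open>mono f\<close> by (rule sugeno_capacity_of_le) (rule assms(2)[unfolded inf_homogeneous_def, rule_format])
qed

lemma eq_sugeno_if_sup_homogeneous_comonotone_infimal:
  assumes "aggregation f" "sup_homogeneous f" "comonotone_infimal f"
  shows "f = sugeno (capacity_of f)"
proof (intro ext antisym)
  fix x
  have "mono f" and idem: "\<And>c. f (\<lambda>_. c) = c"
    using assms(1,2) by (auto simp: aggregation_def intro: sup_homogeneous_idempotent)
  show "f x \<le> sugeno (capacity_of f) x"
    using \<open>mono f\<close> assms(2) by (rule le_sugeno_if_sup_homogeneous)
  show "sugeno (capacity_of f) x \<le> f x"
    using \<open>mono f\<close> comonotone_infimal_inf_char_vec[OF idem assms(3)] by (rule sugeno_capacity_of_le)
qed

theorem corollary3:
  fixes f :: "('n::finite \<Rightarrow> 'a::{distrib_lattice,bounded_lattice}) \<Rightarrow> 'a"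
  assumes "aggregation f"
    and "(inf_homogeneous f \<and> comonotone_supremal f) \<or> (sup_homogeneous f \<and> comonotone_infimal f)"
  shows "\<exists>m :: 'n set \<Rightarrow> 'a. capacity m \<and> f = sugeno m"
proof (intro exI conjI)
  show "capacity (capacity_of f)"
    using assms(1) by (rule capacity_capacity_of)
  show "f = sugeno (capacity_of f)"
    using assms(2) eq_sugeno_if_inf_homogeneous_comonotone_supremal[OF assms(1)]
      eq_sugeno_if_sup_homogeneous_comonotone_infimal[OF assms(1)] by blast
qed

end
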